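(* Let $T_1=(Q_1,\Sigma,\Delta,R_1,q_1^0)$ and $T_2=(Q_2,\Delta,\Omega,R_2,q_2^0)$ be top-down tree transducers, let $A$ be the domain automaton of $T_2$, and let $\hat{T}_1$ be the product construction of $T_1$ and $A$. Then $\mathcal{R}(T_1)\circ\mathcal{R}(T_2)=\mathcal{R}(\hat{T}_1)\circ\mathcal{R}(T_2)$.
   Context: A top-down tree transducer $T=(Q,\Sigma,\Delta,R,q_0)$ has finite state set $Q$, ranked input/output alphabets $\Sigma,\Delta$, initial state $q_0$, and finite rule set $R$ of rules $q(a(x_1,\dots,x_k))\to t$ with $a\in\Sigma_k$ ($\Sigma_k$ = symbols of rank $k$) and $t$ a tree over $\Delta$ whose leaves may additionally be of the form $q'(x_i)$, $q'\in Q$, $i\in[k]$; rules are used as rewrite rules in the usual way. $\mathcal{R}(T)$ is the set of pairs $(s,t)$ with $t$ a tree over $\Delta$ derivable from $q_0(s)$; $\mathcal{R}_1\circ\mathcal{R}_2=\{(s,u)\mid\exists t:(s,t)\in\mathcal{R}_1,(t,u)\in\mathcal{R}_2\}$. For $q\in Q$, $a\in\Sigma_k$, $\text{rhs}_T(q,a)$ is the set of right-hand sides of rules with left-hand side $q(a(x_1,\dots,x_k))$; for a set $\Gamma$ of right-hand sides, $\Gamma[x_i]$ is the set of $q'\in Q$ with $q'(x_i)$ occurring in some tree of $\Gamma$. Domain automaton of $T$: the top-down tree automaton (transducer over $\Sigma$ with rules of the form $p(a(x_1,\dots,x_k))\to a(p_1(x_1),\dots,p_k(x_k))$) with states all subsets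 of $Q$, initial state $\{q_0\}$, rules $S(a(x_1,\dots,x_k))\to a(S_1(x_1),\dots,S_k(x_k))$ for every $a\in\Sigma_k$, nonempty $S=\{q_1,\dots,q_n\}\subseteq Q$ and nonempty $\Gamma_j\subseteq\text{rhs}_T(q_j,a)$ ($j\in[n]$), where $S_i=\bigcup_j\Gamma_j[x_i]$, and rules $\emptyset(a(x_1,\dots,x_k))\to a(\emptyset(x_1),\dots,\emptyset(x_k))$ for all $a$. Product construction of transducers $T=(Q,\Sigma,\Delta,R,q_0)$ and $T'=(Q',\Delta,\Omega,R',q'_0)$: the transducer with states $Q\times Q'$, input $\Sigma$, output $\Omega$, initial state $(q_0,q'_0)$, and, for every rule $q(a(x_1,\dots,x_k))\to\xi$ of $T$, every $p\in Q'$ and every tree $\zeta$ derivable from $p(\xi)$ using rules of $T'$ in which the leaves of $\xi$ of the form $q''(x_i)$ are treated as unrewritable symbols and a state $p'$ applied to such a leaf stays as $p'(q''(x_i))$, the rule $(q,p)(a(x_1,\dots,x_k))\to\zeta'$, where $\zeta'$ is obtained from $\zeta$ by replacing each $p'(q''(x_i))$ by $(q'',p')(x_i)$. *)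

theory Defs
  imports Main
begin

datatype 'f rtree = Nd 'f "'f rtree list"

text \<open>Right-hand sides: trees over an output alphabet whose leaves may additionally be
  state calls q(x_i). Variable x_{i+1} is encoded by the (0-based) index i.\<close>
datatype ('g, 'q) rhs = RNode 'g "('g, 'q) rhs list" | RState 'q nat

fun wt :: "('f \<times> nat) set \<Rightarrow> 'f rtree \<Rightarrow> bool" where
  "wt A (Nd a ts) \<longleftrightarrow> (a, length ts) \<in> A \<and> (\<forall>t\<in>set ts. wt A t)"

fun wf_rhs :: "('g \<times> nat) set \<Rightarrow> 'q set \<Rightarrow> nat \<Rightarrow> ('g, 'q) rhs \<Rightarrow> bool" where
  "wf_rhs D Q k (RState q i) \<longleftrightarrow> q \<in> Q \<and> i < k"
| "wf_rhs D Q k (RNode b rs) \<longleftrightarrow> (b, length rs) \<in> D \<and> (\<forall>r\<in>set rs. wf_rhs D Q k r)"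

fun calls :: "('g, 'q) rhs \<Rightarrow> ('q \<times> nat) set" where
  "calls (RState q i) = {(q, i)}"
| "calls (RNode b rs) = (\<Union>r\<in>set rs. calls r)"

text \<open>A rule (q, (a,k), t) stands for q(a(x_1,...,x_k)) -> t.\<close>
record ('q, 'f, 'g) tt =
  tt_states :: "'q set"
  tt_inp :: "('f \<times> nat) set"
  tt_out :: "('g \<times> nat) set"
  tt_rules :: "('q \<times> ('f \<times> nat) \<times> ('g, 'q) rhs) set"
  tt_init :: 'q

definition wf_tt :: "('q, 'f, 'g) tt \<Rightarrow> bool" where
  "wf_tt T \<longleftrightarrow> finite (tt_states T) \<and> finite (tt_inp T) \<and> finite (tt_out T)
     \<and> finite (tt_rules T) \<and> tt_init T \<in> tt_states T
     \<and> (\<forall>(q, (a, k), r) \<in> tt_rules T.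
          q \<in> tt_states T \<and> (a, k) \<in> tt_inp T \<and> wf_rhs (tt_out T) (tt_states T) k r)"

text \<open>Derivation semantics: trans T q s t holds iff the ground tree t is derivable from q(s)
  (each state call in a right-hand side is rewritten independently).\<close>
inductive trans :: "('q, 'f, 'g) tt \<Rightarrow> 'q \<Rightarrow> 'f rtree \<Rightarrow> 'g rtree \<Rightarrow> bool"
  and inst :: "('q, 'f, 'g) tt \<Rightarrow> 'f rtree list \<Rightarrow> ('g, 'q) rhs \<Rightarrow> 'g rtree \<Rightarrow> bool"
  for T where
  trans_rule: "(q, (a, length ss), r) \<in> tt_rules T \<Longrightarrow> inst T ss r t \<Longrightarrow> trans T q (Nd a ss) t"
| inst_state: "i < length ss \<Longrightarrow> trans T q (ss ! i) t \<Longrightarrow> inst T ss (RState q i) t"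
| inst_node: "list_all2 (inst T ss) rs ts \<Longrightarrow> inst T ss (RNode b rs) (Nd b ts)"

definition rel :: "('q, 'f, 'g) tt \<Rightarrow> ('f rtree \<times> 'g rtree) set" where
  "rel T = {(s, t). wt (tt_inp T) s \<and> wt (tt_out T) t \<and> trans T (tt_init T) s t}"

definition rhs_set :: "('q, 'f, 'g) tt \<Rightarrow> 'q \<Rightarrow> 'f \<times> nat \<Rightarrow> ('g, 'q) rhs set" where
  "rhs_set T q ak = {r. (q, ak, r) \<in> tt_rules T}"

definition calls_at :: "('g, 'q) rhs set \<Rightarrow> nat \<Rightarrow> 'q set" where
  "calls_at \<Gamma> i = {q'. \<exists>\<xi>\<in>\<Gamma>. (q', i) \<in> calls \<xi>}"

definition dom_aut :: "('q, 'f, 'g) tt \<Rightarrow> ('q set, 'f, 'f) tt" where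
  "dom_aut T = \<lparr> tt_states = Pow (tt_states T),
     tt_inp = tt_inp T, tt_out = tt_inp T,
     tt_rules =
       {(S, (a, k), RNode a (map (\<lambda>i. RState (\<Union>q\<in>S. calls_at (\<Gamma> q) i) i) [0..<k])) | S a k \<Gamma>.
          (a, k) \<in> tt_inp T \<and> S \<subseteq> tt_states T \<and> S \<noteq> {}
          \<and> (\<forall>q\<in>S. \<Gamma> q \<noteq> {} \<and> \<Gamma> q \<subseteq> rhs_set T q (a, k))}
       \<union> {({}, (a, k), RNode a (map (\<lambda>i. RState {} i) [0..<k])) | a k. (a, k) \<in> tt_inp T},
     tt_init = {tt_init T} \<rparr>"

text \<open>prod_der T' p \<xi> \<zeta>': the tree \<zeta> is derivable from p(\<xi>) by rules of T', where leaves
  q''(x_i) of \<xi> are unrewritable and p'(q''(x_i)) is recorded as the state call (q'',p')(x_i).\<close>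
inductive prod_der :: "('p, 'g, 'h) tt \<Rightarrow> 'p \<Rightarrow> ('g, 'q) rhs \<Rightarrow> ('h, 'q \<times> 'p) rhs \<Rightarrow> bool"
  and prod_inst :: "('p, 'g, 'h) tt \<Rightarrow> ('g, 'q) rhs list \<Rightarrow> ('h, 'p) rhs \<Rightarrow> ('h, 'q \<times> 'p) rhs \<Rightarrow> bool"
  for T' where
  pd_leaf: "prod_der T' p (RState q i) (RState (q, p) i)"
| pd_rule: "(p, (b, length xs), r) \<in> tt_rules T' \<Longrightarrow> prod_inst T' xs r z \<Longrightarrow> prod_der T' p (RNode b xs) z"
| pi_state: "j < length xs \<Longrightarrow> prod_der T' p' (xs ! j) z \<Longrightarrow> prod_inst T' xs (RState p' j) z"
| pi_node: "list_all2 (prod_inst T' xs) rs zs \<Longrightarrow> prod_inst T' xs (RNode c rs) (RNode c zs)"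

definition product :: "('q, 'f, 'g) tt \<Rightarrow> ('p, 'g, 'h) tt \<Rightarrow> ('q \<times> 'p, 'f, 'h) tt" where
  "product T T' = \<lparr> tt_states = tt_states T \<times> tt_states T',
     tt_inp = tt_inp T, tt_out = tt_out T',
     tt_rules = {((q, p), (a, k), z) | q p a k \<xi> z.
        (q, (a, k), \<xi>) \<in> tt_rules T \<and> p \<in> tt_states T' \<and> prod_der T' p \<xi> z},
     tt_init = (tt_init T, tt_init T') \<rparr>"

end

theory Submission
  imports Defs
begin

text \<open>Forgetting the automaton component of the product states maps every derivation of
  the product to one of T1, because the domain automaton copies the tree it reads; so the
  product can only lose pairs. Conversely, let T1 translate s into t and let every state of a
  set P of T2-states translate t. Choosing for each p in P a rule of T2 that starts a successful
  translation of t, the domain automaton has a rule at the root of t that sends to the i-th child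
  exactly the states these rules call on x_i, and each of them translates the i-th subtree.
  By induction the product derives t from (q, P)(s); for P = {q0 of T2} it therefore keeps every
  pair whose output lies in the domain of T2, and only those matter after composing with R(T2).\<close>

definition in_domain :: "('q, 'f, 'g) tt \<Rightarrow> 'q \<Rightarrow> 'f rtree \<Rightarrow> bool" where
  "in_domain T q s \<longleftrightarrow> (\<exists>t. trans T q s t)"

definition tree_automaton :: "('p, 'g, 'g) tt \<Rightarrow> bool" where
  "tree_automaton A \<longleftrightarrow>
     (\<forall>(p, (b, k), r) \<in> tt_rules A. \<exists>f. r = RNode b (map (\<lambda>i. RState (f i) i) [0..<k]))"

fun subst_rhs :: "('g, 'q) rhs list \<Rightarrow> ('g, 'p) rhs \<Rightarrow> ('g, 'q) rhs" where
  "subst_rhs xs (RState p j) = xs ! j"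
| "subst_rhs xs (RNode c rs) = RNode c (map (subst_rhs xs) rs)"

inductive_cases trans_NdE: "trans T q (Nd a ss) t"

lemma dom_aut_simps [simp]:
  "tt_states (dom_aut T) = Pow (tt_states T)"
  "tt_inp (dom_aut T) = tt_inp T"
  "tt_out (dom_aut T) = tt_inp T"
  "tt_init (dom_aut T) = {tt_init T}"
  by (simp_all add: dom_aut_def)

lemma product_simps [simp]:
  "tt_states (product T T') = tt_states T \<times> tt_states T'"
  "tt_inp (product T T') = tt_inp T"
  "tt_out (product T T') = tt_out T'"
  "tt_init (product T T') = (tt_init T, tt_init T')"
  by (simp_all add: product_def)

lemma product_rules_iff:
  "((q, p), (a, k), z) \<in> tt_rules (product T T') \<longleftrightarrow>
     p \<in> tt_states T' \<and> (\<exists>\<xi>. (q, (a, k), \<xi>) \<in> tt_rules T \<and> prod_der T' p \<xi> z)"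
  by (auto simp: product_def)

lemma wf_rhs_calls_in_states: "wf_rhs D Q k r \<Longrightarrow> (q, i) \<in> calls r \<Longrightarrow> q \<in> Q"
  by (induction r) auto

lemma inst_calls_in_domain:
  "inst T ts r u \<Longrightarrow> (q, i) \<in> calls r \<Longrightarrow> in_domain T q (ts ! i)"
proof (induction r arbitrary: u)
  case (RNode b rs)
  then obtain us where "list_all2 (inst T ts) rs us"
    by (auto elim: inst.cases)
  moreover from RNode.prems(2) obtain r where "r \<in> set rs" "(q, i) \<in> calls r"
    by auto
  ultimately show ?case
    using RNode.IH by (metis in_set_conv_nth list_all2_conv_all_nth)
next
  case (RState q' j)
  then show ?case by (auto simp: in_domain_def elim: inst.cases)
qed

lemma tree_automaton_dom_aut: "tree_automaton (dom_aut T)"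
  unfolding tree_automaton_def dom_aut_def by auto

lemma dom_aut_ruleI:
  assumes "(a, k) \<in> tt_inp T" and "S \<subseteq> tt_states T"
    and "\<And>q. q \<in> S \<Longrightarrow> \<Gamma> q \<noteq> {} \<and> \<Gamma> q \<subseteq> rhs_set T q (a, k)"
  shows "(S, (a, k), RNode a (map (\<lambda>i. RState (\<Union>q\<in>S. calls_at (\<Gamma> q) i) i) [0..<k]))
           \<in> tt_rules (dom_aut T)"
proof (cases "S = {}")
  case True
  then show ?thesis using assms(1) by (auto simp: dom_aut_def)
next
  case False
  then show ?thesis using assms unfolding dom_aut_def by (simp, blast)
qed

lemma dom_aut_rule_for_domain:
  assumes "wf_tt T" and "P \<subseteq> tt_states T" and "(b, length ts) \<in> tt_inp T"
    and "\<And>p. p \<in> P \<Longrightarrow> in_domain T p (Nd b ts)"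
  obtains S where
    "(P, (b, length ts), RNode b (map (\<lambda>i. RState (S i) i) [0..<length ts])) \<in> tt_rules (dom_aut T)"
    "\<And>i. S i \<subseteq> tt_states T" "\<And>i p. p \<in> S i \<Longrightarrow> in_domain T p (ts ! i)"
proof -
  have "\<forall>p\<in>P. \<exists>r. (p, (b, length ts), r) \<in> tt_rules T \<and> (\<exists>u. inst T ts r u)"
    using assms(4) by (fastforce simp: in_domain_def elim: trans_NdE)
  then obtain \<rho> where \<rho>: "\<And>p. p \<in> P \<Longrightarrow> (p, (b, length ts), \<rho> p) \<in> tt_rules T \<and> (\<exists>u. inst T ts (\<rho> p) u)"
    by metis
  define S where "S i = (\<Union>p\<in>P. calls_at {\<rho> p} i)" for i
  have S: "p \<in> tt_states T \<and> in_domain T p (ts ! i)" if "p \<in> S i" for i p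
  proof
    from that obtain q where q: "q \<in> P" "(p, i) \<in> calls (\<rho> q)"
      by (auto simp: S_def calls_at_def)
    with \<rho> obtain u where rule: "(q, (b, length ts), \<rho> q) \<in> tt_rules T" and u: "inst T ts (\<rho> q) u"
      by blast
    from rule show "p \<in> tt_states T"
      using assms(1) q(2) wf_rhs_calls_in_states unfolding wf_tt_def by fastforce
    from u q(2) show "in_domain T p (ts ! i)"
      by (rule inst_calls_in_domain)
  qed
  have "(P, (b, length ts), RNode b (map (\<lambda>i. RState (S i) i) [0..<length ts])) \<in> tt_rules (dom_aut T)"
    unfolding S_def using assms(2,3) \<rho> by (intro dom_aut_ruleI) (auto simp: rhs_set_def)
  with S show ?thesis
    by (intro that) auto
qed

lemma prod_der_automaton_node:
  assumes "(p, (b, length xs), RNode b (map (\<lambda>i. RState (f i) i) [0..<length xs])) \<in> tt_rules A"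
    and "length zs = length xs" and "\<And>i. i < length xs \<Longrightarrow> prod_der A (f i) (xs ! i) (zs ! i)"
  shows "prod_der A p (RNode b xs) (RNode b zs)"
proof (rule pd_rule[OF assms(1)], rule pi_node)
  show "list_all2 (prod_inst A xs) (map (\<lambda>i. RState (f i) i) [0..<length xs]) zs"
    using assms(2,3) by (auto simp: list_all2_conv_all_nth intro: pi_state)
qed

lemma prod_der_automaton_erase:
  assumes "tree_automaton A"
  shows "prod_der A p \<xi> z \<Longrightarrow> map_rhs id fst z = \<xi>"
    and "prod_inst A xs r z \<Longrightarrow> map_rhs id fst z = subst_rhs xs r"
proof (induction rule: prod_der_prod_inst.inducts)
  case (pd_rule p b xs r z)
  then obtain f where "r = RNode b (map (\<lambda>i. RState (f i) i) [0..<length xs])"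
    using assms unfolding tree_automaton_def by fastforce
  then have "subst_rhs xs r = RNode b xs"
    by (simp add: o_def map_nth)
  with pd_rule.IH show ?case by simp
next
  case (pi_node xs rs zs c)
  have "map (map_rhs id fst) zs = map (subst_rhs xs) rs"
    using pi_node.IH by (induction rule: list_all2_induct) auto
  then show ?case by (simp add: id_def)
qed simp_all

lemma trans_product_automaton:
  assumes "tree_automaton A"
  shows "trans (product T A) qp s t \<Longrightarrow> trans T (fst qp) s t"
    and "inst (product T A) ss z t \<Longrightarrow> inst T ss (map_rhs id fst z) t"
proof (induction rule: trans_inst.inducts)
  case (trans_rule qp a ss z t)
  then obtain \<xi> where "(fst qp, (a, length ss), \<xi>) \<in> tt_rules T" "prod_der A (snd qp) \<xi> z"
    by (metis prod.collapse product_rules_iff)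
  with trans_rule.IH show ?case
    using prod_der_automaton_erase(1)[OF assms] by (metis trans_inst.trans_rule)
next
  case (inst_node ss rs ts b)
  have "list_all2 (inst T ss) (map (map_rhs id fst) rs) ts"
    using inst_node.IH by (induction rule: list_all2_induct) auto
  then show ?case by (simp add: id_def trans_inst.inst_node)
qed (auto intro: trans_inst.inst_state)

lemma rel_product_automaton_subset:
  assumes "tree_automaton A" and "tt_out A = tt_out T"
  shows "rel (product T A) \<subseteq> rel T"
  using trans_product_automaton(1)[OF assms(1)] assms(2) by (auto simp: rel_def)

lemma trans_product_dom_aut:
  assumes "wf_tt T2"
  shows "trans T1 q s t \<Longrightarrow> P \<subseteq> tt_states T2 \<Longrightarrow> wt (tt_inp T2) t \<Longrightarrow>
           (\<forall>p\<in>P. in_domain T2 p t) \<Longrightarrow> trans (product T1 (dom_aut T2)) (q, P) s t"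
    and "inst T1 ss \<xi> t \<Longrightarrow> P \<subseteq> tt_states T2 \<Longrightarrow> wt (tt_inp T2) t \<Longrightarrow>
           (\<forall>p\<in>P. in_domain T2 p t) \<Longrightarrow>
           \<exists>z. prod_der (dom_aut T2) P \<xi> z \<and> inst (product T1 (dom_aut T2)) ss z t"
proof (induction arbitrary: P and P rule: trans_inst.inducts)
  case (trans_rule q a ss r t)
  then obtain z where z: "prod_der (dom_aut T2) P r z" "inst (product T1 (dom_aut T2)) ss z t"
    by blast
  with trans_rule have "((q, P), (a, length ss), z) \<in> tt_rules (product T1 (dom_aut T2))"
    by (auto simp: product_rules_iff)
  then show ?case
    using z(2) by (rule trans_inst.trans_rule)
next
  case (inst_state i ss q t)
  then show ?case by (blast intro: pd_leaf trans_inst.inst_state)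
next
  case (inst_node ss rs ts b)
  have len: "length rs = length ts"
    using inst_node.IH by (rule list_all2_lengthD)
  obtain S where rule:
      "(P, (b, length ts), RNode b (map (\<lambda>i. RState (S i) i) [0..<length ts])) \<in> tt_rules (dom_aut T2)"
    and S: "\<And>i. S i \<subseteq> tt_states T2" "\<And>i p. p \<in> S i \<Longrightarrow> in_domain T2 p (ts ! i)"
    using dom_aut_rule_for_domain[OF assms inst_node.prems(1) _ bspec[OF inst_node.prems(3)]] inst_node.prems(2)
    by auto
  have "\<forall>i<length rs. \<exists>z. prod_der (dom_aut T2) (S i) (rs ! i) z
                          \<and> inst (product T1 (dom_aut T2)) ss z (ts ! i)"
    using inst_node.IH inst_node.prems(2) S len by (auto simp: list_all2_conv_all_nth)
  then obtain z where z: "\<And>i. i < length rs \<Longrightarrow> prod_der (dom_aut T2) (S i) (rs ! i) (z i)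
                                \<and> inst (product T1 (dom_aut T2)) ss (z i) (ts ! i)"
    by metis
  let ?zs = "map z [0..<length rs]"
  have "prod_der (dom_aut T2) P (RNode b rs) (RNode b ?zs)"
    using rule z len by (intro prod_der_automaton_node) auto
  moreover have "inst (product T1 (dom_aut T2)) ss (RNode b ?zs) (Nd b ts)"
    using z len by (auto simp: list_all2_conv_all_nth intro: trans_inst.inst_node)
  ultimately show ?case by blast
qed

theorem lemma3:
  fixes T1 :: "('q1, 'f, 'g) tt" and T2 :: "('q2, 'g, 'h) tt"
  assumes "wf_tt T1" and "wf_tt T2" and "tt_out T1 = tt_inp T2"
  shows "rel T1 O rel T2 = rel (product T1 (dom_aut T2)) O rel T2"
proof
  show "rel T1 O rel T2 \<subseteq> rel (product T1 (dom_aut T2)) O rel T2"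
  proof clarify
    fix s t u assume st: "(s, t) \<in> rel T1" and tu: "(t, u) \<in> rel T2"
    have "tt_init T2 \<in> tt_states T2" using assms(2) by (simp add: wf_tt_def)
    with st tu assms(3) have "trans (product T1 (dom_aut T2)) (tt_init T1, {tt_init T2}) s t"
      by (intro trans_product_dom_aut(1)[OF assms(2)]) (auto simp: rel_def in_domain_def)
    with st tu assms(3) show "(s, u) \<in> rel (product T1 (dom_aut T2)) O rel T2"
      by (auto simp: rel_def)
  qed
  show "rel (product T1 (dom_aut T2)) O rel T2 \<subseteq> rel T1 O rel T2"
    using rel_product_automaton_subset[OF tree_automaton_dom_aut] assms(3) by auto
qed

end
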